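(* Let $(X,\Psi)$ be a $\sigma$-compact uniform space and $Y\subseteq X$. The following are equivalent: (1) $X$ satisfies $\textsf{S}_1(\Omega,\Omega_Y)$; (2) for each positive integer $k$, $\Omega\rightarrow(\Omega_Y)^2_k$ holds.
   Context: A uniformity on $X$ is a filter $\Psi$ on $X\times X$ whose members contain the diagonal, closed under $U\mapsto U^{-1}$, such that for each $U\in\Psi$ there is $V\in\Psi$ with $V\circ V\subseteq U$, and with $\bigcap\Psi$ equal to the diagonal; $X$ carries the topology with neighbourhood bases $\{U(x):U\in\Psi\}$, $U(x)=\{y:(x,y)\in U\}$. $\sigma$-compact: countable union of compact sets. $\Omega$ is the set of $\omega$-covers of $X$: open covers $\mathcal{U}$ with $X\notin\mathcal{U}$ such that each finite subset of $X$ lies in some member. $\Omega_Y$ is the set of $\omega$-covers of $Y$ by sets open in $X$: families of open subsets of $X$, none containing $Y$, such that each finite subset of $Y$ lies in some member. $\textsf{S}_1(\mathcal{A},\mathcal{B})$: for every sequence $(O_n)$ of elements of $\mathcal{A}$ there are $T_n\in O_n$ with $\{T_n:n\in\mathbb{N}\}\in\mathcal{B}$. $\mathcal{A}\rightarrow(\mathcal{B})^2_k$: for each $A\in\mathcal{A}$ and $f:[A]^2\to\{1,\dots,k\}$ there are $i$ and $B\subseteq A$, $B\in\mathcal{B}$, with $f$ constant equal to $i$ on the 2-element subsets of $B$. *)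

theory Defs
  imports Complex_Main "HOL-Library.Ramsey"
begin

definition uniformity_separated :: "('a::uniform_space) itself \<Rightarrow> bool" where
  "uniformity_separated _ \<longleftrightarrow>
     (\<forall>x y::'a. (\<forall>U. eventually (\<lambda>p. p \<in> U) uniformity \<longrightarrow> (x, y) \<in> U) \<longrightarrow> x = y)"

definition sigma_compact_space :: "('a::topological_space) itself \<Rightarrow> bool" where
  "sigma_compact_space _ \<longleftrightarrow> (\<exists>K :: nat \<Rightarrow> 'a set. (\<forall>n. compact (K n)) \<and> (\<Union>n. K n) = UNIV)"

definition omega_covers :: "('a::topological_space) set set set" where
  "omega_covers = {\<U>. (\<forall>U\<in>\<U>. open U) \<and> \<Union>\<U> = UNIV \<and> UNIV \<notin> \<U> \<and>
      (\<forall>F. finite F \<longrightarrow> (\<exists>U\<in>\<U>. F \<subseteq> U))}"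

definition omega_covers_of :: "('a::topological_space) set \<Rightarrow> 'a set set set" where
  "omega_covers_of Y = {\<U>. (\<forall>U\<in>\<U>. open U) \<and> (\<forall>U\<in>\<U>. \<not> Y \<subseteq> U) \<and>
      (\<forall>F. finite F \<and> F \<subseteq> Y \<longrightarrow> (\<exists>U\<in>\<U>. F \<subseteq> U))}"

definition S1 :: "'b set set \<Rightarrow> 'b set set \<Rightarrow> bool" where
  "S1 A B \<longleftrightarrow> (\<forall>\<O> :: nat \<Rightarrow> 'b set. (\<forall>n. \<O> n \<in> A) \<longrightarrow>
      (\<exists>T :: nat \<Rightarrow> 'b. (\<forall>n. T n \<in> \<O> n) \<and> range T \<in> B))"

definition partition_rel2 :: "'b set set \<Rightarrow> 'b set set \<Rightarrow> nat \<Rightarrow> bool" where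
  "partition_rel2 A B k \<longleftrightarrow> (\<forall>\<A>\<in>A. \<forall>f :: 'b set \<Rightarrow> nat. f ` ([\<A>]\<^bsup>2\<^esup>) \<subseteq> {1..k} \<longrightarrow>
      (\<exists>i\<in>{1..k}. \<exists>\<B>. \<B> \<subseteq> \<A> \<and> \<B> \<in> B \<and> (\<forall>P\<in>[\<B>]\<^bsup>2\<^esup>. f P = i)))"

end

(*
  If the complement of Y is infinite, the co-singletons X - {p} with p outside Y form an omega-cover
  none of whose subfamilies is an omega-cover of Y, so both properties fail.  If the complement Z of
  Y is finite, an omega-cover stays one after discarding the members not containing Z, and a family
  of sets containing Z is an omega-cover of Y exactly when it is an omega-cover of X.  Both
  properties thus reduce to Scheepers' theorem S1(Omega, Omega) <-> Omega -> (Omega)^2_k.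

  For S1 => partition, sigma-compactness lets us pass to a countable omega-cover a_0, a_1, ...
  Shrinking index sets P_n, where P_(n+1) keeps the indices j whose pair {a_n, a_j} has a chosen
  colour c_n, remain omega-covers; S1 selects t_m in P_m with the same colour c_(t_m) = i, so that
  {a_(t_m), a_(t_m')} has colour i whenever t_m < m'.  A second application of S1, to intersections
  over 2n+1 well separated indices, thins the selection until of any two chosen indices one lies
  beyond the t-value of the other.

  For partition => S1, remove a point y_n from the members of the n-th cover and colour a pair by
  whether its members come from the same cover.  A homogeneous omega-subcover cannot come from a
  single cover, as y_n must be covered; so it takes at most one member from each cover.
*)

theory Submission
  imports Defs "HOL-Library.Countable_Set" "HOL-Analysis.Elementary_Topology"
begin

section \<open>Omega-covers\<close>

lemma omega_covers_iff:
  "\<U> \<in> omega_covers \<longleftrightarrow>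
     (\<forall>U\<in>\<U>. open U) \<and> UNIV \<notin> \<U> \<and> (\<forall>F. finite F \<longrightarrow> (\<exists>U\<in>\<U>. F \<subseteq> U))"
proof -
  have "x \<in> \<Union>\<U>" if "\<forall>F. finite F \<longrightarrow> (\<exists>U\<in>\<U>. F \<subseteq> U)" for x
    using that[rule_format, of "{x}"] by auto
  then show ?thesis unfolding omega_covers_def by auto
qed

lemma omega_coversI:
  assumes "\<And>U. U \<in> \<U> \<Longrightarrow> open U" "UNIV \<notin> \<U>" "\<And>F. finite F \<Longrightarrow> \<exists>U\<in>\<U>. F \<subseteq> U"
  shows "\<U> \<in> omega_covers"
  using assms by (simp add: omega_covers_iff)

lemma omega_coversD:
  assumes "\<U> \<in> omega_covers"
  shows "U \<in> \<U> \<Longrightarrow> open U" "UNIV \<notin> \<U>" "finite F \<Longrightarrow> \<exists>U\<in>\<U>. F \<subseteq> U"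
  using assms by (auto simp: omega_covers_iff)

lemma omega_covers_subfamily:
  assumes "\<U> \<in> omega_covers" "\<V> \<subseteq> \<U>" "\<And>F. finite F \<Longrightarrow> \<exists>V\<in>\<V>. F \<subseteq> V"
  shows "\<V> \<in> omega_covers"
  using assms by (auto simp: omega_covers_iff)

lemma omega_covers_mono:
  assumes "\<V> \<in> omega_covers" "\<V> \<subseteq> \<W>" "\<W> \<subseteq> \<U>" "\<U> \<in> omega_covers"
  shows "\<W> \<in> omega_covers"
proof (rule omega_covers_subfamily[OF assms(4,3)])
  fix F :: "'a set"
  assume "finite F"
  then show "\<exists>W\<in>\<W>. F \<subseteq> W"
    using omega_coversD(3)[OF assms(1)] assms(2) by blast
qed

lemma omega_covers_Un:
  assumes "\<U> \<union> \<V> \<in> omega_covers"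
  shows "\<U> \<in> omega_covers \<or> \<V> \<in> omega_covers"
proof (rule disjCI)
  assume "\<V> \<notin> omega_covers"
  then obtain G where G: "finite G" "\<And>V. V \<in> \<V> \<Longrightarrow> \<not> G \<subseteq> V"
    using omega_covers_subfamily[OF assms, of \<V>] by blast
  show "\<U> \<in> omega_covers"
  proof (rule omega_covers_subfamily[OF assms])
    fix F :: "'a set"
    assume "finite F"
    then obtain W where "W \<in> \<U> \<union> \<V>" "F \<union> G \<subseteq> W"
      using omega_coversD(3)[OF assms, of "F \<union> G"] G(1) by blast
    with G(2) show "\<exists>U\<in>\<U>. F \<subseteq> U" by blast
  qed auto
qed

lemma omega_covers_UN:
  assumes "finite I" "(\<Union>i\<in>I. \<U> i) \<in> omega_covers"
  shows "\<exists>i\<in>I. \<U> i \<in> omega_covers"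
  using assms
proof (induction I rule: finite_induct)
  case empty
  then show ?case using omega_coversD(3)[of "{}" "{}"] by simp
next
  case (insert i I)
  then show ?case using omega_covers_Un[of "\<U> i"] by auto
qed

lemma omega_covers_Diff_finite:
  assumes "\<U> \<in> omega_covers" "finite \<E>"
  shows "\<U> - \<E> \<in> omega_covers"
proof (rule omega_covers_subfamily[OF assms(1)])
  fix F :: "'a set"
  assume "finite F"
  obtain p where p: "\<And>U. U \<in> \<U> \<Longrightarrow> p U \<notin> U"
    using omega_coversD(2)[OF assms(1)] by (metis UNIV_eq_I)
  obtain V where "V \<in> \<U>" "F \<union> p ` (\<E> \<inter> \<U>) \<subseteq> V"
    using omega_coversD(3)[OF assms(1), of "F \<union> p ` (\<E> \<inter> \<U>)"] \<open>finite F\<close> assms(2) by auto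
  with p show "\<exists>V\<in>\<U> - \<E>. F \<subseteq> V" by blast
qed auto

lemma omega_covers_infinite:
  assumes "\<U> \<in> omega_covers"
  shows "infinite \<U>"
proof
  assume "finite \<U>"
  then have "\<U> - \<U> \<in> omega_covers" using assms by (rule omega_covers_Diff_finite[rotated])
  then show False using omega_coversD(3)[of "{}" "{}"] by simp
qed

lemma omega_covers_infinite_UNIV:
  assumes "(\<U> :: 'a::topological_space set set) \<in> omega_covers"
  shows "infinite (UNIV :: 'a set)"
proof
  assume "finite (UNIV :: 'a set)"
  then obtain U where "U \<in> \<U>" "UNIV \<subseteq> U"
    using omega_coversD(3)[OF assms \<open>finite UNIV\<close>] by blast
  then show False using omega_coversD(2)[OF assms] by (simp add: top.extremum_unique)
qed

lemma omega_covers_infinitely_often: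
  assumes "range b \<in> omega_covers" "finite F"
  shows "infinite {m. F \<subseteq> b m}"
proof
  assume "finite {m. F \<subseteq> b m}"
  then have "range b - b ` {m. F \<subseteq> b m} \<in> omega_covers"
    using assms(1) by (simp add: omega_covers_Diff_finite)
  from omega_coversD(3)[OF this assms(2)] show False by auto
qed

lemma omega_covers_restrict:
  assumes "\<U> \<in> omega_covers" "finite Z"
  shows "{U\<in>\<U>. Z \<subseteq> U} \<in> omega_covers"
proof (rule omega_covers_subfamily[OF assms(1)])
  fix F :: "'a set"
  assume "finite F"
  then show "\<exists>U\<in>{U\<in>\<U>. Z \<subseteq> U}. F \<subseteq> U"
    using omega_coversD(3)[OF assms(1), of "F \<union> Z"] assms(2) by auto
qed auto

lemma omega_covers_of_iff_omega_covers:
  assumes "\<And>U. U \<in> \<U> \<Longrightarrow> - Y \<subseteq> U"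
  shows "\<U> \<in> omega_covers_of Y \<longleftrightarrow> \<U> \<in> omega_covers"
proof -
  have "Y \<subseteq> U \<longleftrightarrow> U = UNIV" if "U \<in> \<U>" for U
    using assms[OF that] by auto
  then have avoid: "(\<forall>U\<in>\<U>. \<not> Y \<subseteq> U) \<longleftrightarrow> UNIV \<notin> \<U>"
    by blast
  have cover: "(\<forall>F. finite F \<and> F \<subseteq> Y \<longrightarrow> (\<exists>U\<in>\<U>. F \<subseteq> U)) \<longleftrightarrow>
      (\<forall>F. finite F \<longrightarrow> (\<exists>U\<in>\<U>. F \<subseteq> U))"
  proof (intro iffI allI impI)
    fix F :: "'a set"
    assume "\<forall>F. finite F \<and> F \<subseteq> Y \<longrightarrow> (\<exists>U\<in>\<U>. F \<subseteq> U)" "finite F"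
    then obtain U where "U \<in> \<U>" "F \<inter> Y \<subseteq> U" by auto
    with assms show "\<exists>U\<in>\<U>. F \<subseteq> U" by blast
  qed auto
  show ?thesis
    unfolding omega_covers_iff omega_covers_of_def mem_Collect_eq avoid cover ..
qed

lemma S1D:
  fixes \<O> :: "nat \<Rightarrow> 'a set"
  assumes "S1 \<AA> \<BB>" "\<And>n. \<O> n \<in> \<AA>"
  obtains T where "\<And>n. T n \<in> \<O> n" "range T \<in> \<BB>"
  using assms(1)[unfolded S1_def, rule_format, of \<O>] assms(2) by blast

lemma partition_rel2D:
  assumes "partition_rel2 \<AA> \<BB> k" "A \<in> \<AA>" "f ` [A]\<^bsup>2\<^esup> \<subseteq> {1..k}"
  obtains i B where "i \<in> {1..k}" "B \<subseteq> A" "B \<in> \<BB>" "\<And>P. P \<in> [B]\<^bsup>2\<^esup> \<Longrightarrow> f P = i"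
  using assms(1)[unfolded partition_rel2_def, rule_format, OF assms(2,3)] by blast

lemma S1_imp_subfamily:
  assumes "S1 \<AA> \<BB>" "A \<in> \<AA>"
  shows "\<exists>B\<subseteq>A. B \<in> \<BB>"
proof -
  obtain T where "\<And>n::nat. T n \<in> A" "range T \<in> \<BB>"
    using S1D[OF assms(1), of "\<lambda>_. A"] assms(2) by blast
  then show ?thesis by blast
qed

lemma partition_rel2_imp_subfamily:
  assumes "partition_rel2 \<AA> \<BB> k" "1 \<le> k" "A \<in> \<AA>"
  shows "\<exists>B\<subseteq>A. B \<in> \<BB>"
proof -
  have "(\<lambda>_. 1) ` [A]\<^bsup>2\<^esup> \<subseteq> {1..k}" using assms(2) by auto
  then obtain B where "B \<subseteq> A" "B \<in> \<BB>"
    by (rule partition_rel2D[OF assms(1,3)])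
  then show ?thesis by blast
qed

section \<open>Cofinite and coinfinite subspaces\<close>

lemma S1_omega_covers_transfer:
  fixes Z :: "'a::topological_space set"
  assumes "S1 omega_covers \<BB>" "finite Z"
    and "\<And>\<U>. \<U> \<in> \<BB> \<Longrightarrow> (\<And>U. U \<in> \<U> \<Longrightarrow> Z \<subseteq> U) \<Longrightarrow> \<U> \<in> \<BB>'"
  shows "S1 (omega_covers :: 'a set set set) \<BB>'"
  unfolding S1_def
proof (intro allI impI)
  fix \<O> :: "nat \<Rightarrow> 'a set set"
  assume "\<forall>n. \<O> n \<in> omega_covers"
  then have "{U\<in>\<O> n. Z \<subseteq> U} \<in> omega_covers" for n
    using omega_covers_restrict assms(2) by blast
  then obtain T where T: "\<And>n. T n \<in> {U\<in>\<O> n. Z \<subseteq> U}" "range T \<in> \<BB>"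
    by (rule S1D[OF assms(1), of "\<lambda>n. {U\<in>\<O> n. Z \<subseteq> U}"]) auto
  have "range T \<in> \<BB>'"
    by (rule assms(3)[OF T(2)]) (use T(1) in auto)
  with T(1) show "\<exists>T. (\<forall>n. T n \<in> \<O> n) \<and> range T \<in> \<BB>'" by blast
qed

lemma partition_rel2_omega_covers_transfer:
  fixes Z :: "'a::topological_space set"
  assumes "partition_rel2 omega_covers \<BB> k" "finite Z"
    and "\<And>\<U>. \<U> \<in> \<BB> \<Longrightarrow> (\<And>U. U \<in> \<U> \<Longrightarrow> Z \<subseteq> U) \<Longrightarrow> \<U> \<in> \<BB>'"
  shows "partition_rel2 (omega_covers :: 'a set set set) \<BB>' k"
  unfolding partition_rel2_def
proof (intro ballI allI impI)
  fix A :: "'a set set" and f :: "'a set set \<Rightarrow> nat"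
  assume A: "A \<in> omega_covers" and f: "f ` [A]\<^bsup>2\<^esup> \<subseteq> {1..k}"
  have "f ` [{U\<in>A. Z \<subseteq> U}]\<^bsup>2\<^esup> \<subseteq> {1..k}"
    using f nsets_mono[of "{U\<in>A. Z \<subseteq> U}" A 2] by blast
  then obtain i B where B: "i \<in> {1..k}" "B \<subseteq> {U\<in>A. Z \<subseteq> U}" "B \<in> \<BB>"
      "\<And>P. P \<in> [B]\<^bsup>2\<^esup> \<Longrightarrow> f P = i"
    by (rule partition_rel2D[OF assms(1) omega_covers_restrict[OF A assms(2)]]) auto
  have "B \<in> \<BB>'"
    by (rule assms(3)[OF B(3)]) (use B(2) in auto)
  with B show "\<exists>i\<in>{1..k}. \<exists>B. B \<subseteq> A \<and> B \<in> \<BB>' \<and> (\<forall>P\<in>[B]\<^bsup>2\<^esup>. f P = i)"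
    by (intro bexI[of _ i] exI[of _ B]) auto
qed

lemma S1_omega_covers_of_cofinite:
  fixes Y :: "'a::topological_space set"
  assumes "finite (- Y)"
  shows "S1 omega_covers (omega_covers_of Y) \<longleftrightarrow> S1 (omega_covers :: 'a set set set) omega_covers"
proof
  assume "S1 omega_covers (omega_covers_of Y)"
  then show "S1 (omega_covers :: 'a set set set) omega_covers"
    by (rule S1_omega_covers_transfer[OF _ assms]) (simp add: omega_covers_of_iff_omega_covers)
next
  assume "S1 (omega_covers :: 'a set set set) omega_covers"
  then show "S1 omega_covers (omega_covers_of Y)"
    by (rule S1_omega_covers_transfer[OF _ assms]) (simp add: omega_covers_of_iff_omega_covers)
qed

lemma partition_rel2_omega_covers_of_cofinite:
  fixes Y :: "'a::topological_space set"
  assumes "finite (- Y)"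
  shows "partition_rel2 omega_covers (omega_covers_of Y) k \<longleftrightarrow>
    partition_rel2 (omega_covers :: 'a set set set) omega_covers k"
proof
  assume "partition_rel2 omega_covers (omega_covers_of Y) k"
  then show "partition_rel2 (omega_covers :: 'a set set set) omega_covers k"
    by (rule partition_rel2_omega_covers_transfer[OF _ assms])
      (simp add: omega_covers_of_iff_omega_covers)
next
  assume "partition_rel2 (omega_covers :: 'a set set set) omega_covers k"
  then show "partition_rel2 omega_covers (omega_covers_of Y) k"
    by (rule partition_rel2_omega_covers_transfer[OF _ assms])
      (simp add: omega_covers_of_iff_omega_covers)
qed

lemma uniformity_separated_open_Compl_singleton:
  assumes "uniformity_separated TYPE('a::uniform_space)"
  shows "open (- {p :: 'a})"
  unfolding open_uniformity
proof
  fix x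
  assume "x \<in> - {p}"
  then obtain U where U: "eventually (\<lambda>q. q \<in> U) uniformity" "(x, p) \<notin> U"
    using assms unfolding uniformity_separated_def by blast
  show "\<forall>\<^sub>F (x', y) in uniformity. x' = x \<longrightarrow> y \<in> - {p}"
    using U(1) by (rule eventually_mono) (use U(2) in auto)
qed

lemma omega_cover_of_co_singletons:
  fixes Y :: "'a::topological_space set"
  assumes "\<And>p::'a. open (- {p})" "infinite (- Y)"
  shows "(\<lambda>p. - {p}) ` (- Y) \<in> omega_covers"
    and "B \<subseteq> (\<lambda>p. - {p}) ` (- Y) \<Longrightarrow> B \<notin> omega_covers_of Y"
proof -
  show "(\<lambda>p. - {p}) ` (- Y) \<in> omega_covers"
  proof (rule omega_coversI)
    fix F :: "'a set"
    assume "finite F"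
    have "infinite (- Y - F)"
      using assms(2) \<open>finite F\<close> by (rule Diff_infinite_finite[rotated])
    then obtain p where "p \<in> - Y - F"
      using infinite_imp_nonempty by blast
    then show "\<exists>U\<in>(\<lambda>p. - {p}) ` (- Y). F \<subseteq> U" by blast
  qed (use assms(1) in auto)
  assume sub: "B \<subseteq> (\<lambda>p. - {p}) ` (- Y)"
  show "B \<notin> omega_covers_of Y"
  proof
    assume B: "B \<in> omega_covers_of Y"
    then obtain U where "U \<in> B"
      unfolding omega_covers_of_def by blast
    moreover from this sub have "Y \<subseteq> U" by blast
    ultimately show False
      using B unfolding omega_covers_of_def by blast
  qed
qed

lemma S1_partition_rel2_fail_coinfinite:
  fixes Y :: "'a::topological_space set"
  assumes "\<And>p::'a. open (- {p})" "infinite (- Y)"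
  shows "\<not> S1 (omega_covers :: 'a set set set) (omega_covers_of Y)"
    and "1 \<le> k \<Longrightarrow> \<not> partition_rel2 (omega_covers :: 'a set set set) (omega_covers_of Y) k"
proof -
  have no_subfamily: "\<not> (\<exists>B\<subseteq>(\<lambda>p. - {p}) ` (- Y). B \<in> omega_covers_of Y)"
    using omega_cover_of_co_singletons(2)[OF assms] by blast
  show "\<not> S1 (omega_covers :: 'a set set set) (omega_covers_of Y)"
    using S1_imp_subfamily[OF _ omega_cover_of_co_singletons(1)[OF assms]] no_subfamily by blast
  show "\<not> partition_rel2 (omega_covers :: 'a set set set) (omega_covers_of Y) k" if "1 \<le> k"
    using partition_rel2_imp_subfamily[OF _ that omega_cover_of_co_singletons(1)[OF assms]]
      no_subfamily by blast
qed

section \<open>Countable omega-subcovers in sigma-compact spaces\<close>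

lemma compact_finite_subfamily_insert:
  fixes K :: "'a::topological_space set"
  assumes "compact K" "\<And>U. U \<in> \<U> \<Longrightarrow> open U"
    and "\<forall>x\<in>K. \<exists>\<V>\<subseteq>\<U>. finite \<V> \<and>
      (\<forall>F. finite F \<and> F \<subseteq> K \<and> card F \<le> m \<longrightarrow> (\<exists>U\<in>\<V>. insert x G \<union> F \<subseteq> U))"
  shows "\<exists>\<V>\<subseteq>\<U>. finite \<V> \<and>
    (\<forall>F. finite F \<and> F \<noteq> {} \<and> F \<subseteq> K \<and> card F \<le> Suc m \<longrightarrow> (\<exists>U\<in>\<V>. G \<union> F \<subseteq> U))"
proof -
  obtain \<V>\<^sub>x where \<V>\<^sub>x: "\<forall>x\<in>K. \<V>\<^sub>x x \<subseteq> \<U> \<and> finite (\<V>\<^sub>x x) \<and>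
      (\<forall>F. finite F \<and> F \<subseteq> K \<and> card F \<le> m \<longrightarrow> (\<exists>U\<in>\<V>\<^sub>x x. insert x G \<union> F \<subseteq> U))"
    by (rule bchoice[OF assms(3), THEN exE])
  \<comment> \<open>Any point of \<open>N x\<close> can take over the role of \<open>x\<close>.\<close>
  define N where "N x = \<Inter>{V \<in> \<V>\<^sub>x x. x \<in> V}" for x
  have "open (N x)" if "x \<in> K" for x
  proof -
    have "\<V>\<^sub>x x \<subseteq> \<U>" "finite (\<V>\<^sub>x x)" using \<V>\<^sub>x that by blast+
    then show ?thesis unfolding N_def using assms(2) by (intro open_Inter) auto
  qed
  moreover have "K \<subseteq> (\<Union>x\<in>K. N x)" unfolding N_def by auto
  ultimately obtain K\<^sub>0 where K\<^sub>0: "K\<^sub>0 \<subseteq> K" "finite K\<^sub>0" "K \<subseteq> (\<Union>x\<in>K\<^sub>0. N x)"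
    using compactE_image[OF assms(1), of K N] by blast
  have "\<exists>U\<in>(\<Union>x\<in>K\<^sub>0. \<V>\<^sub>x x). G \<union> F \<subseteq> U"
    if F: "finite F" "F \<noteq> {}" "F \<subseteq> K" "card F \<le> Suc m" for F
  proof -
    obtain y where y: "y \<in> F" using F(2) by blast
    then obtain x where x: "x \<in> K\<^sub>0" "y \<in> N x" using K\<^sub>0 F(3) by blast
    then have "x \<in> K" using K\<^sub>0(1) by blast
    have "finite (F - {y})" "F - {y} \<subseteq> K" "card (F - {y}) \<le> m" using F y by auto
    then obtain V where V: "V \<in> \<V>\<^sub>x x" "insert x G \<union> (F - {y}) \<subseteq> V"
      using \<V>\<^sub>x \<open>x \<in> K\<close> by blast
    then have "N x \<subseteq> V" unfolding N_def by auto
    with V x y have "G \<union> F \<subseteq> V" by auto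
    then show ?thesis using V x by blast
  qed
  moreover have "(\<Union>x\<in>K\<^sub>0. \<V>\<^sub>x x) \<subseteq> \<U>" "finite (\<Union>x\<in>K\<^sub>0. \<V>\<^sub>x x)"
    using \<V>\<^sub>x K\<^sub>0(1,2) by auto
  ultimately show ?thesis by blast
qed

lemma compact_finite_subfamily_card_le:
  fixes K :: "'a::topological_space set"
  assumes "compact K" "\<And>U. U \<in> \<U> \<Longrightarrow> open U"
    and "\<And>F. finite F \<Longrightarrow> F \<subseteq> K \<Longrightarrow> card F \<le> m \<Longrightarrow> \<exists>U\<in>\<U>. G \<union> F \<subseteq> U"
  shows "\<exists>\<V>\<subseteq>\<U>. finite \<V> \<and>
    (\<forall>F. finite F \<and> F \<subseteq> K \<and> card F \<le> m \<longrightarrow> (\<exists>U\<in>\<V>. G \<union> F \<subseteq> U))"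
  using assms(3)
proof (induction m arbitrary: G)
  case 0
  then obtain U where "U \<in> \<U>" "G \<subseteq> U" by force
  then show ?case by (intro exI[of _ "{U}"]) auto
next
  case (Suc m)
  obtain U\<^sub>0 where U\<^sub>0: "U\<^sub>0 \<in> \<U>" "G \<subseteq> U\<^sub>0" using Suc.prems[of "{}"] by auto
  have "\<forall>x\<in>K. \<exists>\<V>\<subseteq>\<U>. finite \<V> \<and>
      (\<forall>F. finite F \<and> F \<subseteq> K \<and> card F \<le> m \<longrightarrow> (\<exists>U\<in>\<V>. insert x G \<union> F \<subseteq> U))"
  proof
    fix x
    assume "x \<in> K"
    show "\<exists>\<V>\<subseteq>\<U>. finite \<V> \<and>
        (\<forall>F. finite F \<and> F \<subseteq> K \<and> card F \<le> m \<longrightarrow> (\<exists>U\<in>\<V>. insert x G \<union> F \<subseteq> U))"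
    proof (rule Suc.IH)
      fix F
      assume "finite F" "F \<subseteq> K" "card F \<le> m"
      then have "finite (insert x F)" "insert x F \<subseteq> K" "card (insert x F) \<le> Suc m"
        using \<open>x \<in> K\<close> by (auto simp: card_insert_if)
      then obtain U where "U \<in> \<U>" "G \<union> insert x F \<subseteq> U" using Suc.prems by blast
      then show "\<exists>U\<in>\<U>. insert x G \<union> F \<subseteq> U" by auto
    qed
  qed
  from compact_finite_subfamily_insert[OF assms(1,2) this] obtain \<V> where \<V>: "\<V> \<subseteq> \<U>" "finite \<V>"
    "\<forall>F. finite F \<and> F \<noteq> {} \<and> F \<subseteq> K \<and> card F \<le> Suc m \<longrightarrow> (\<exists>U\<in>\<V>. G \<union> F \<subseteq> U)"
    by blast
  have "\<exists>U\<in>insert U\<^sub>0 \<V>. G \<union> F \<subseteq> U" if "finite F" "F \<subseteq> K" "card F \<le> Suc m" for F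
    using U\<^sub>0(2) \<V>(3) that by (cases "F = {}") auto
  then show ?case using U\<^sub>0(1) \<V>(1,2) by (intro exI[of _ "insert U\<^sub>0 \<V>"]) auto
qed

lemma finite_subset_UN_atMost:
  fixes K :: "nat \<Rightarrow> 'a set"
  assumes "F \<subseteq> (\<Union>n. K n)" "finite F"
  shows "\<exists>n. F \<subseteq> (\<Union>j\<le>n. K j)"
proof -
  have "\<forall>x\<in>F. \<exists>n. x \<in> K n" using assms(1) by blast
  then obtain j where j: "\<forall>x\<in>F. x \<in> K (j x)"
    by (rule bchoice[THEN exE])
  have "j x \<le> Max (insert 0 (j ` F))" if "x \<in> F" for x
    using assms(2) that by simp
  then have "F \<subseteq> (\<Union>i\<le>Max (insert 0 (j ` F)). K i)" using j by blast
  then show ?thesis ..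
qed

lemma sigma_compact_countable_omega_subcover:
  assumes "sigma_compact_space TYPE('a::topological_space)" "(\<U> :: 'a set set) \<in> omega_covers"
  shows "\<exists>\<V>\<subseteq>\<U>. countable \<V> \<and> \<V> \<in> omega_covers"
proof -
  obtain K :: "nat \<Rightarrow> 'a set" where K: "\<And>n. compact (K n)" "(\<Union>n. K n) = UNIV"
    using assms(1) unfolding sigma_compact_space_def by blast
  define L where "L n = (\<Union>j\<le>n. K j)" for n
  define covers_small where "covers_small n m \<V> \<longleftrightarrow> \<V> \<subseteq> \<U> \<and> finite \<V> \<and>
      (\<forall>F. finite F \<and> F \<subseteq> L n \<and> card F \<le> m \<longrightarrow> (\<exists>U\<in>\<V>. F \<subseteq> U))" for n m \<V>
  have "\<exists>\<V>. covers_small n m \<V>" for n m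
  proof -
    have "\<exists>\<V>\<subseteq>\<U>. finite \<V> \<and> (\<forall>F. finite F \<and> F \<subseteq> L n \<and> card F \<le> m \<longrightarrow> (\<exists>U\<in>\<V>. {} \<union> F \<subseteq> U))"
    proof (rule compact_finite_subfamily_card_le)
      show "compact (L n)" unfolding L_def using K(1) by blast
    qed (use omega_coversD[OF assms(2)] in auto)
    then show ?thesis unfolding covers_small_def by auto
  qed
  then obtain \<V>\<^sub>n\<^sub>m where "\<And>n m. covers_small n m (\<V>\<^sub>n\<^sub>m n m)" by metis
  then have sub: "\<V>\<^sub>n\<^sub>m n m \<subseteq> \<U>" and fin: "finite (\<V>\<^sub>n\<^sub>m n m)"
    and cov: "\<And>F. finite F \<Longrightarrow> F \<subseteq> L n \<Longrightarrow> card F \<le> m \<Longrightarrow> \<exists>U\<in>\<V>\<^sub>n\<^sub>m n m. F \<subseteq> U" for n m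
    unfolding covers_small_def by auto
  have "\<exists>U\<in>(\<Union>n m. \<V>\<^sub>n\<^sub>m n m). F \<subseteq> U" if "finite F" for F
  proof -
    obtain n where "F \<subseteq> L n"
      unfolding L_def using finite_subset_UN_atMost[OF _ \<open>finite F\<close>, of K] K(2) by auto
    then obtain U where "U \<in> \<V>\<^sub>n\<^sub>m n (card F)" "F \<subseteq> U"
      using cov \<open>finite F\<close> by blast
    then show ?thesis by blast
  qed
  then have "(\<Union>n m. \<V>\<^sub>n\<^sub>m n m) \<in> omega_covers"
    by (intro omega_covers_subfamily[OF assms(2)]) (use sub in blast)+
  moreover have "countable (\<Union>n m. \<V>\<^sub>n\<^sub>m n m)"
    using fin by (blast intro: countable_finite)
  moreover have "(\<Union>n m. \<V>\<^sub>n\<^sub>m n m) \<subseteq> \<U>"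
    using sub by blast
  ultimately show ?thesis by blast
qed

section \<open>From S1 to the partition relation\<close>

lemma finite_ex_all_of_antimono:
  fixes Q :: "nat \<Rightarrow> 'b \<Rightarrow> bool"
  assumes "finite I" "\<And>m. \<exists>i\<in>I. Q m i" "\<And>m m' i. m \<le> m' \<Longrightarrow> Q m' i \<Longrightarrow> Q m i"
  shows "\<exists>i\<in>I. \<forall>m. Q m i"
proof -
  obtain g where g: "\<And>m. g m \<in> I" "\<And>m. Q m (g m)" using assms(2) by metis
  have "finite (range g)" using g(1) assms(1) by (meson finite_subset image_subsetI)
  then obtain i where i: "i \<in> range g" "infinite (g -` {i})"
    by (rule inf_img_fin_domE) simp
  have "Q m i" for m
  proof -
    obtain m' where "m \<le> m'" "g m' = i"
      using i(2) unfolding infinite_nat_iff_unbounded_le by blast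
    then show ?thesis using g(2)[of m'] assms(3) by blast
  qed
  then show ?thesis using i(1) g(1) by blast
qed

lemma omega_covers_split_by_colour:
  fixes a :: "nat \<Rightarrow> 'a::topological_space set" and f :: "'a set set \<Rightarrow> nat"
  assumes "inj a" "f ` [range a]\<^bsup>2\<^esup> \<subseteq> {1..k}" "a ` S \<in> omega_covers"
  shows "\<exists>i\<in>{1..k}. a ` (S \<inter> {j. j \<noteq> n \<and> f {a n, a j} = i}) \<in> omega_covers"
proof -
  have "f {a n, a j} \<in> {1..k}" if "j \<noteq> n" for j
  proof -
    have "{a n, a j} \<in> [range a]\<^bsup>2\<^esup>"
      using assms(1) that by (simp add: inj_eq)
    then show ?thesis using assms(2) by blast
  qed
  then have "a ` (S - {n}) = (\<Union>i\<in>{1..k}. a ` (S \<inter> {j. j \<noteq> n \<and> f {a n, a j} = i}))"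
    by blast
  moreover have "a ` (S - {n}) = a ` S - {a n}"
    using assms(1) by (simp add: image_set_diff)
  ultimately have "(\<Union>i\<in>{1..k}. a ` (S \<inter> {j. j \<noteq> n \<and> f {a n, a j} = i})) \<in> omega_covers"
    using omega_covers_Diff_finite[OF assms(3), of "{a n}"] by simp
  then show ?thesis by (rule omega_covers_UN[rotated]) simp
qed

lemma colour_refining_sequence:
  fixes a :: "nat \<Rightarrow> 'a::topological_space set" and f :: "'a set set \<Rightarrow> nat"
  assumes a: "inj a" "range a \<in> omega_covers" and f: "f ` [range a]\<^bsup>2\<^esup> \<subseteq> {1..k}"
  obtains P c where "\<And>n. P (Suc n) = P n \<inter> {j. j \<noteq> n \<and> f {a n, a j} = c n}"
    "\<And>n. c n \<in> {1..k}" "\<And>n. a ` P n \<in> omega_covers"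
proof -
  define N where "N i n = {j. j \<noteq> n \<and> f {a n, a j} = i}" for i n
  define colour where "colour n S = (SOME i. i \<in> {1..k} \<and> a ` (S \<inter> N i n) \<in> omega_covers)"
    for n S
  define P where "P = rec_nat UNIV (\<lambda>n S. S \<inter> N (colour n S) n)"
  define c where "c n = colour n (P n)" for n
  have P_Suc: "P (Suc n) = P n \<inter> N (c n) n" for n
    unfolding P_def c_def by simp
  have c_P: "c n \<in> {1..k} \<and> a ` (P n \<inter> N (c n) n) \<in> omega_covers" if "a ` P n \<in> omega_covers" for n
    unfolding c_def colour_def N_def
    by (rule someI_ex) (use omega_covers_split_by_colour[OF a(1) f that] in blast)
  have P_omega: "a ` P n \<in> omega_covers" for n
  proof (induction n)
    case 0
    then show ?case using a(2) by (simp add: P_def)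
  next
    case (Suc n)
    then show ?case using c_P P_Suc by simp
  qed
  show thesis
  proof (rule that)
    show "P (Suc n) = P n \<inter> {j. j \<noteq> n \<and> f {a n, a j} = c n}" for n
      using P_Suc unfolding N_def .
  qed (use c_P P_omega in blast)+
qed

lemma S1_monochromatic_selection:
  fixes a :: "nat \<Rightarrow> 'a::topological_space set" and f :: "'a set set \<Rightarrow> nat"
  assumes S1: "S1 (omega_covers :: 'a set set set) omega_covers"
    and a: "inj a" "range a \<in> omega_covers"
    and f: "f ` [range a]\<^bsup>2\<^esup> \<subseteq> {1..k}"
  shows "\<exists>i\<in>{1..k}. \<exists>t :: nat \<Rightarrow> nat. range (a \<circ> t) \<in> omega_covers \<and>
    (\<forall>m m'. t m < m' \<longrightarrow> f {a (t m), a (t m')} = i)"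
proof -
  obtain P c where P_Suc: "\<And>n. P (Suc n) = P n \<inter> {j. j \<noteq> n \<and> f {a n, a j} = c n}"
    and c: "\<And>n. c n \<in> {1..k}" and P_omega: "\<And>n. a ` P n \<in> omega_covers"
    by (rule colour_refining_sequence[OF a f]) (rule that)
  have P_antimono: "P m' \<subseteq> P m" if "m \<le> m'" for m m'
    using lift_Suc_antimono_le[of P, OF _ that] P_Suc by blast
  have P_colour: "f {a n, a j} = c n" if "n < m'" "j \<in> P m'" for n m' j
    using P_antimono[of "Suc n" m'] that P_Suc by auto
  define C where "C i = {n. c n = i}" for i
  have "\<exists>i\<in>{1..k}. \<forall>m. a ` (P m \<inter> C i) \<in> omega_covers"
  proof (rule finite_ex_all_of_antimono)
    fix m
    have "a ` P m = (\<Union>i\<in>{1..k}. a ` (P m \<inter> C i))"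
      using c unfolding C_def by blast
    then show "\<exists>i\<in>{1..k}. a ` (P m \<inter> C i) \<in> omega_covers"
      using P_omega[of m] by (intro omega_covers_UN) simp_all
  next
    fix m m' i
    assume "m \<le> m'" "a ` (P m' \<inter> C i) \<in> omega_covers"
    moreover have "a ` (P m' \<inter> C i) \<subseteq> a ` (P m \<inter> C i)"
      using P_antimono[OF \<open>m \<le> m'\<close>] by blast
    ultimately show "a ` (P m \<inter> C i) \<in> omega_covers"
      using omega_covers_mono[OF _ _ _ a(2)] by blast
  qed simp
  then obtain i where i: "i \<in> {1..k}" "\<And>m. a ` (P m \<inter> C i) \<in> omega_covers"
    by blast
  obtain T where T: "\<And>m. T m \<in> a ` (P m \<inter> C i)" "range T \<in> omega_covers"
    by (rule S1D[OF S1, of "\<lambda>m. a ` (P m \<inter> C i)"]) (use i(2) in auto)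
  have "\<forall>m. \<exists>j. j \<in> P m \<inter> C i \<and> T m = a j"
    using T(1) by blast
  then obtain t where t: "\<And>m. t m \<in> P m \<inter> C i" "\<And>m. T m = a (t m)"
    by metis
  have "range (a \<circ> t) \<in> omega_covers"
    using T(2) t(2) by (simp add: image_comp[symmetric])
  moreover have "f {a (t m), a (t m')} = i" if "t m < m'" for m m'
    using P_colour[OF that, of "t m'"] t(1)[of m] t(1)[of m'] unfolding C_def by simp
  ultimately show ?thesis using i(1) by blast
qed

definition separated_by :: "(nat \<Rightarrow> nat) \<Rightarrow> nat set \<Rightarrow> bool" where
  "separated_by T Q \<longleftrightarrow> (\<forall>x\<in>Q. \<forall>y\<in>Q. x < y \<longrightarrow> T x < y)"

lemma infinite_imp_separated_subset:
  assumes "infinite M"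
  shows "\<exists>Q\<subseteq>M. finite Q \<and> card Q = n \<and> separated_by T Q"
proof (induction n)
  case 0
  show ?case by (intro exI[of _ "{}"]) (simp add: separated_by_def)
next
  case (Suc n)
  then obtain Q where Q: "Q \<subseteq> M" "finite Q" "card Q = n" "separated_by T Q"
    by blast
  obtain x where x: "x \<in> M" "Max (insert 0 (Q \<union> T ` Q)) < x"
    using assms unfolding infinite_nat_iff_unbounded by blast
  have above: "y < x" "T y < x" if "y \<in> Q" for y
    using Q(2) that le_less_trans[OF Max_ge x(2)] by auto
  then have "card (insert x Q) = Suc n" using Q(2,3) by (subst card_insert_disjoint) auto
  with above have "insert x Q \<subseteq> M \<and> finite (insert x Q) \<and> card (insert x Q) = Suc n \<and>
      separated_by T (insert x Q)"
    using Q x(1) unfolding separated_by_def by (auto dest: less_asym)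
  then show ?case by blast
qed

lemma card_conflicts_le_2:
  assumes "mono T" "separated_by T Q"
  shows "card {x\<in>Q. x \<le> T y \<and> y \<le> T x} \<le> 2"
proof -
  define B where "B = {x\<in>Q. x \<le> T y \<and> y \<le> T x}"
  have straddle: "x < y \<and> y < x'" if "x \<in> B" "x' \<in> B" "x < x'" for x x'
  proof -
    have "T x < x'" using that assms(2) unfolding B_def separated_by_def by blast
    moreover have "x' \<le> T y" "y \<le> T x" using that(1,2) unfolding B_def by auto
    ultimately have "T x < T y" by linarith
    then have "x < y" using monoD[OF assms(1), of y x] by linarith
    with \<open>T x < x'\<close> \<open>y \<le> T x\<close> show ?thesis by linarith
  qed
  have "finite B" unfolding B_def by (rule finite_subset[of _ "{..T y}"]) auto
  have subsingleton: "card {x\<in>B. S x} \<le> 1" if excl: "\<And>x x'. x \<in> B \<Longrightarrow> x' \<in> B \<Longrightarrow> x < x' \<Longrightarrow> S x \<Longrightarrow> S x' \<Longrightarrow> False"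
    for S
  proof -
    have "x = x'" if "x \<in> {x\<in>B. S x}" "x' \<in> {x\<in>B. S x}" for x x'
      using that excl[of x x'] excl[of x' x]
      by (cases x x' rule: linorder_cases) auto
    then show ?thesis using \<open>finite B\<close> by (subst One_nat_def, subst card_le_Suc0_iff_eq) auto
  qed
  have "card {x\<in>B. x < y} \<le> 1"
    by (rule subsingleton) (use straddle in fastforce)
  moreover have "card {x\<in>B. y \<le> x} \<le> 1"
    by (rule subsingleton) (use straddle in fastforce)
  moreover have "card B = card ({x\<in>B. x < y} \<union> {x\<in>B. y \<le> x})"
    by (rule arg_cong[where f = card]) auto
  moreover note card_Un_le[of "{x\<in>B. x < y}" "{x\<in>B. y \<le> x}"]
  ultimately show ?thesis unfolding B_def by linarith
qed

lemma separated_intersections_omega_cover: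
  fixes b :: "nat \<Rightarrow> 'a::topological_space set"
  assumes b: "range b \<in> omega_covers" and "0 < N"
  shows "(\<lambda>Q. \<Inter>q\<in>Q. b q) ` {Q. card Q = N \<and> separated_by T Q} \<in> omega_covers"
proof (rule omega_coversI)
  fix U
  assume "U \<in> (\<lambda>Q. \<Inter>q\<in>Q. b q) ` {Q. card Q = N \<and> separated_by T Q}"
  then obtain Q where Q: "card Q = N" "U = (\<Inter>q\<in>Q. b q)" by auto
  then have "finite Q" using \<open>0 < N\<close> by (simp add: card_ge_0_finite)
  then show "open U" using Q(2) omega_coversD(1)[OF b] by auto
next
  show "UNIV \<notin> (\<lambda>Q. \<Inter>q\<in>Q. b q) ` {Q. card Q = N \<and> separated_by T Q}"
  proof
    assume "UNIV \<in> (\<lambda>Q. \<Inter>q\<in>Q. b q) ` {Q. card Q = N \<and> separated_by T Q}"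
    then obtain Q where Q: "card Q = N" "UNIV = (\<Inter>q\<in>Q. b q)" by auto
    then have "Q \<noteq> {}" using \<open>0 < N\<close> by auto
    then obtain q where "q \<in> Q" by auto
    then have "b q = UNIV" using Q(2) by auto
    then show False using omega_coversD(2)[OF b] by (metis rangeI)
  qed
next
  fix F :: "'a set"
  assume "finite F"
  then have "infinite {m. F \<subseteq> b m}"
    by (rule omega_covers_infinitely_often[OF b])
  then obtain Q where Q: "Q \<subseteq> {m. F \<subseteq> b m}" "card Q = N" "separated_by T Q"
    using infinite_imp_separated_subset[of _ N T] by blast
  then have "(\<Inter>q\<in>Q. b q) \<in> (\<lambda>Q. \<Inter>q\<in>Q. b q) ` {Q. card Q = N \<and> separated_by T Q}"
    by (intro imageI) simp
  moreover have "F \<subseteq> (\<Inter>q\<in>Q. b q)" using Q(1) by blast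
  ultimately show "\<exists>U\<in>(\<lambda>Q. \<Inter>q\<in>Q. b q) ` {Q. card Q = N \<and> separated_by T Q}. F \<subseteq> U"
    by blast
qed

lemma separated_avoids_conflicts:
  assumes "mono T" "separated_by T Q" "finite R" "2 * card R < card Q"
  shows "\<exists>x\<in>Q. \<forall>y\<in>R. T y < x \<or> T x < y"
proof -
  define bad where "bad = (\<Union>y\<in>R. {x\<in>Q. x \<le> T y \<and> y \<le> T x})"
  have "card bad \<le> (\<Sum>y\<in>R. card {x\<in>Q. x \<le> T y \<and> y \<le> T x})"
    unfolding bad_def by (rule card_UN_le[OF assms(3)])
  also have "\<dots> \<le> (\<Sum>y\<in>R. 2)"
    by (rule sum_mono) (rule card_conflicts_le_2[OF assms(1,2)])
  also have "\<dots> < card Q"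
    using assms(4) by simp
  finally have "card bad < card Q" .
  have "finite Q" using assms(4) by (simp add: card_ge_0_finite)
  moreover have "bad \<subseteq> Q" unfolding bad_def by blast
  ultimately have "finite bad" by (rule finite_subset[rotated])
  have "\<not> Q \<subseteq> bad"
  proof
    assume "Q \<subseteq> bad"
    then have "card Q \<le> card bad" by (rule card_mono[OF \<open>finite bad\<close>])
    with \<open>card bad < card Q\<close> show False by simp
  qed
  then obtain x where x: "x \<in> Q" "x \<notin> bad" by blast
  have "T y < x \<or> T x < y" if "y \<in> R" for y
    using x that unfolding bad_def by auto
  with x(1) show ?thesis by blast
qed

lemma greedy_sequence:
  assumes "\<And>n R. finite R \<Longrightarrow> card R \<le> n \<Longrightarrow> \<exists>x\<in>Q n. \<forall>y\<in>R. r x y"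
  shows "\<exists>q. \<forall>n. q n \<in> Q n \<and> (\<forall>m<n. r (q n) (q m))"
proof -
  define pick where "pick n R = (SOME x. x \<in> Q n \<and> (\<forall>y\<in>R. r x y))" for n R
  define prefix where "prefix = rec_nat {} (\<lambda>n R. insert (pick n R) R)"
  define q where "q n = pick n (prefix n)" for n
  have prefix: "prefix n = q ` {..<n}" for n
    by (induction n) (auto simp: prefix_def q_def lessThan_Suc)
  have "q n \<in> Q n \<and> (\<forall>y\<in>prefix n. r (q n) y)" for n
  proof -
    have "finite (prefix n)" "card (prefix n) \<le> n"
      using prefix[of n] card_image_le[of "{..<n}" q] by auto
    then have "\<exists>x. x \<in> Q n \<and> (\<forall>y\<in>prefix n. r x y)" using assms by blast
    then show ?thesis unfolding q_def pick_def by (rule someI_ex)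
  qed
  then show ?thesis unfolding prefix by blast
qed

lemma S1_separated_subsequence:
  fixes b :: "nat \<Rightarrow> 'a::topological_space set" and T :: "nat \<Rightarrow> nat"
  assumes S1: "S1 (omega_covers :: 'a set set set) omega_covers"
    and b: "range b \<in> omega_covers" and T: "mono T"
  shows "\<exists>q :: nat \<Rightarrow> nat. range (b \<circ> q) \<in> omega_covers \<and>
    (\<forall>n n'. n \<noteq> n' \<longrightarrow> T (q n) < q n' \<or> T (q n') < q n)"
proof -
  \<comment> \<open>With \<open>2 n + 1\<close> candidates, one of them is compatible with the \<open>n\<close> earlier choices.\<close>
  define \<C> where "\<C> n = (\<lambda>Q. \<Inter>q\<in>Q. b q) ` {Q. card Q = 2 * n + 1 \<and> separated_by T Q}" for n
  have "\<C> n \<in> omega_covers" for n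
    unfolding \<C>_def by (rule separated_intersections_omega_cover[OF b]) simp
  then obtain W where W: "\<And>n. W n \<in> \<C> n" "range W \<in> omega_covers"
    by (rule S1D[OF S1, of \<C>]) auto
  have "\<forall>n. \<exists>Q. card Q = 2 * n + 1 \<and> separated_by T Q \<and> W n = (\<Inter>q\<in>Q. b q)"
    using W(1) unfolding \<C>_def by blast
  then obtain Q where Q: "\<And>n. card (Q n) = 2 * n + 1" "\<And>n. separated_by T (Q n)"
    "\<And>n. W n = (\<Inter>q\<in>Q n. b q)"
    by metis
  have "\<exists>x\<in>Q n. \<forall>y\<in>R. T y < x \<or> T x < y" if "finite R" "card R \<le> n" for n R
    using separated_avoids_conflicts[OF T Q(2) that(1)] that(2) Q(1) by simp
  then have "\<exists>q. \<forall>n. q n \<in> Q n \<and> (\<forall>m<n. T (q m) < q n \<or> T (q n) < q m)"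
    by (rule greedy_sequence[where r = "\<lambda>x y. T y < x \<or> T x < y"])
  then obtain q where q: "\<And>n. q n \<in> Q n" "\<And>n m. m < n \<Longrightarrow> T (q m) < q n \<or> T (q n) < q m"
    by blast
  have "range (b \<circ> q) \<in> omega_covers"
  proof (rule omega_covers_subfamily[OF b])
    fix F :: "'a set"
    assume "finite F"
    then obtain n where "F \<subseteq> W n" using omega_coversD(3)[OF W(2)] by blast
    also have "W n \<subseteq> b (q n)"
      unfolding Q(3) by (rule INT_lower[OF q(1)])
    finally show "\<exists>V\<in>range (b \<circ> q). F \<subseteq> V" by auto
  qed auto
  moreover have "T (q n) < q n' \<or> T (q n') < q n" if "n \<noteq> n'" for n n'
    using q(2)[of n n'] q(2)[of n' n] that by (cases n n' rule: linorder_cases) auto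
  ultimately show ?thesis by blast
qed

lemma S1_homogeneous_subcover_of_enumeration:
  fixes a :: "nat \<Rightarrow> 'a::topological_space set" and f :: "'a set set \<Rightarrow> nat"
  assumes S1: "S1 (omega_covers :: 'a set set set) omega_covers"
    and a: "inj a" "range a \<in> omega_covers" and f: "f ` [range a]\<^bsup>2\<^esup> \<subseteq> {1..k}"
  shows "\<exists>i\<in>{1..k}. \<exists>B\<subseteq>range a. B \<in> omega_covers \<and> (\<forall>P\<in>[B]\<^bsup>2\<^esup>. f P = i)"
proof -
  obtain i t where i: "i \<in> {1..k}" and t: "range (a \<circ> t) \<in> omega_covers"
    and colour: "\<And>m m'. t m < m' \<Longrightarrow> f {a (t m), a (t m')} = i"
    using S1_monochromatic_selection[OF S1 a f] by blast
  define T where "T m = Max (t ` {..m})" for m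
  have "mono T"
    unfolding T_def by (intro monoI Max_mono) auto
  have t_T: "t m \<le> T m" for m
    unfolding T_def by simp
  obtain q :: "nat \<Rightarrow> nat" where q: "range (a \<circ> t \<circ> q) \<in> omega_covers"
    and separated: "\<And>n n'. n \<noteq> n' \<Longrightarrow> T (q n) < q n' \<or> T (q n') < q n"
    using S1_separated_subsequence[OF S1 t \<open>mono T\<close>] by blast
  have "f P = i" if pair: "P \<in> [range (a \<circ> t \<circ> q)]\<^bsup>2\<^esup>" for P
  proof -
    obtain x y where xy: "P = {x, y}" "x \<in> range (a \<circ> t \<circ> q)" "y \<in> range (a \<circ> t \<circ> q)" "x \<noteq> y"
      using pair by (rule nsets2_E)
    then obtain n n' where nn': "x = a (t (q n))" "y = a (t (q n'))" by auto
    then have P: "P = {a (t (q n)), a (t (q n'))}" "t (q n) \<noteq> t (q n')"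
      using xy by auto
    then have "t (q n) < q n' \<or> t (q n') < q n"
      using separated[of n n'] t_T[of "q n"] t_T[of "q n'"] by fastforce
    then show ?thesis
      using colour[of "q n" "q n'"] colour[of "q n'" "q n"] P(1) by (auto simp: insert_commute)
  qed
  moreover have "range (a \<circ> t \<circ> q) \<subseteq> range a" by auto
  ultimately have "range (a \<circ> t \<circ> q) \<subseteq> range a \<and> range (a \<circ> t \<circ> q) \<in> omega_covers \<and>
      (\<forall>P\<in>[range (a \<circ> t \<circ> q)]\<^bsup>2\<^esup>. f P = i)"
    using q by blast
  with i show ?thesis by blast
qed

lemma S1_imp_partition_rel2:
  assumes countable_subcover: "\<And>\<U>. (\<U> :: 'a::topological_space set set) \<in> omega_covers \<Longrightarrow>
      \<exists>\<V>\<subseteq>\<U>. countable \<V> \<and> \<V> \<in> omega_covers"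
    and S1: "S1 (omega_covers :: 'a set set set) omega_covers"
  shows "partition_rel2 (omega_covers :: 'a set set set) omega_covers k"
  unfolding partition_rel2_def
proof (intro ballI allI impI)
  fix A :: "'a set set" and f :: "'a set set \<Rightarrow> nat"
  assume A: "A \<in> omega_covers" and f: "f ` [A]\<^bsup>2\<^esup> \<subseteq> {1..k}"
  obtain V where V: "V \<subseteq> A" "countable V" "V \<in> omega_covers"
    using countable_subcover[OF A] by blast
  define a where "a = from_nat_into V"
  have "bij_betw a UNIV V"
    unfolding a_def using bij_betw_from_nat_into[OF V(2) omega_covers_infinite[OF V(3)]] .
  then have a: "inj a" "range a = V" by (auto simp: bij_betw_def)
  have "f ` [range a]\<^bsup>2\<^esup> \<subseteq> {1..k}"
    using f nsets_mono[of "range a" A 2] a(2) V(1) by blast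
  then have "\<exists>i\<in>{1..k}. \<exists>B\<subseteq>range a. B \<in> omega_covers \<and> (\<forall>P\<in>[B]\<^bsup>2\<^esup>. f P = i)"
    using S1_homogeneous_subcover_of_enumeration[OF S1 a(1)] a(2) V(3) by simp
  then show "\<exists>i\<in>{1..k}. \<exists>B. B \<subseteq> A \<and> B \<in> omega_covers \<and> (\<forall>P\<in>[B]\<^bsup>2\<^esup>. f P = i)"
    using a(2) V(1) by (meson order_trans)
qed

section \<open>From the partition relation to S1\<close>

lemma S1_of_injectively_tagged_refinement:
  fixes \<O> :: "nat \<Rightarrow> 'a::topological_space set set"
  assumes \<O>: "\<And>n. \<O> n \<in> omega_covers"
    and B: "B \<in> omega_covers" "inj_on tag B"
    and refines: "\<And>w. w \<in> B \<Longrightarrow> \<exists>V\<in>\<O> (tag w). w \<subseteq> V"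
  shows "\<exists>T. (\<forall>n. T n \<in> \<O> n) \<and> range T \<in> omega_covers"
proof -
  have "\<forall>w\<in>B. \<exists>V. V \<in> \<O> (tag w) \<and> w \<subseteq> V"
    using refines by blast
  then obtain rep where rep: "\<forall>w\<in>B. rep w \<in> \<O> (tag w) \<and> w \<subseteq> rep w"
    by (rule bchoice[THEN exE])
  have "\<forall>n. \<exists>V. V \<in> \<O> n"
    using omega_coversD(3)[OF \<O>, of "{}"] by blast
  then obtain default where default: "\<forall>n. default n \<in> \<O> n"
    by (rule choice[THEN exE])
  define T where "T n = (if n \<in> tag ` B then rep (inv_into B tag n) else default n)" for n
  have T: "T n \<in> \<O> n" for n
  proof (cases "n \<in> tag ` B")
    case True
    then have "inv_into B tag n \<in> B" "tag (inv_into B tag n) = n"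
      by (auto intro: inv_into_into f_inv_into_f)
    then have "rep (inv_into B tag n) \<in> \<O> n" using rep by metis
    then show ?thesis unfolding T_def using True by simp
  qed (simp add: T_def default)
  have T_tag: "T (tag w) = rep w" if "w \<in> B" for w
    unfolding T_def using that B(2) by simp
  have "range T \<in> omega_covers"
  proof (rule omega_coversI)
    fix U
    assume "U \<in> range T"
    then obtain n where "U \<in> \<O> n" using T by blast
    then show "open U" by (rule omega_coversD(1)[OF \<O>])
  next
    show "UNIV \<notin> range T"
      using T omega_coversD(2)[OF \<O>] by (metis imageE)
  next
    fix F :: "'a set"
    assume "finite F"
    then obtain w where "w \<in> B" "F \<subseteq> w" using omega_coversD(3)[OF B(1)] by blast
    moreover have "w \<subseteq> rep w" using rep \<open>w \<in> B\<close> by blast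
    ultimately have "F \<subseteq> T (tag w)" using T_tag by simp
    then show "\<exists>U\<in>range T. F \<subseteq> U" by blast
  qed
  with T show ?thesis by blast
qed

lemma omega_cover_punctured:
  fixes \<O> :: "nat \<Rightarrow> 'a::topological_space set set"
  assumes T1: "\<And>p :: 'a. open (- {p})" and \<O>: "\<And>n. \<O> n \<in> omega_covers" and "inj y"
  shows "(\<lambda>(n, V). V - {y n}) ` (SIGMA n:UNIV. \<O> n) \<in> omega_covers"
proof (rule omega_coversI)
  fix U
  assume "U \<in> (\<lambda>(n, V). V - {y n}) ` (SIGMA n:UNIV. \<O> n)"
  then obtain n V where "V \<in> \<O> n" "U = V \<inter> - {y n}" by auto
  then show "open U" using T1 omega_coversD(1)[OF \<O>] by (simp add: open_Int)
next
  show "UNIV \<notin> (\<lambda>(n, V). V - {y n}) ` (SIGMA n:UNIV. \<O> n)" by auto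
next
  fix F :: "'a set"
  assume "finite F"
  then have "finite (y -` F)" using \<open>inj y\<close> by (rule finite_vimageI)
  then obtain n where "y n \<notin> F" using ex_new_if_finite[OF infinite_UNIV_nat] by blast
  moreover obtain V where "V \<in> \<O> n" "F \<subseteq> V"
    using omega_coversD(3)[OF \<O> \<open>finite F\<close>] by blast
  ultimately have "V - {y n} \<in> (\<lambda>(n, V). V - {y n}) ` (SIGMA n:UNIV. \<O> n)" "F \<subseteq> V - {y n}"
    by auto
  then show "\<exists>U\<in>(\<lambda>(n, V). V - {y n}) ` (SIGMA n:UNIV. \<O> n). F \<subseteq> U" by blast
qed

lemma omega_cover_tags_differ:
  assumes "B \<in> omega_covers" "\<And>w. w \<in> B \<Longrightarrow> y (tag w) \<notin> w"
  shows "\<exists>v\<in>B. \<exists>w\<in>B. tag v \<noteq> tag w"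
proof -
  obtain w where "w \<in> B"
    using omega_coversD(3)[OF assms(1), of "{}"] by auto
  moreover obtain v where "v \<in> B" "y (tag w) \<in> v"
    using omega_coversD(3)[OF assms(1), of "{y (tag w)}"] by auto
  ultimately show ?thesis using assms(2)[of v] by metis
qed

lemma partition_rel2_imp_S1:
  assumes T1: "\<And>p :: 'a::topological_space. open (- {p})"
    and partition: "partition_rel2 (omega_covers :: 'a set set set) omega_covers 2"
  shows "S1 (omega_covers :: 'a set set set) omega_covers"
  unfolding S1_def
proof (intro allI impI)
  fix \<O> :: "nat \<Rightarrow> 'a set set"
  assume "\<forall>n. \<O> n \<in> omega_covers"
  then have \<O>: "\<And>n. \<O> n \<in> omega_covers" by blast
  obtain y :: "nat \<Rightarrow> 'a" where "inj y"
    using infinite_iff_countable_subset[THEN iffD1, OF omega_covers_infinite_UNIV[OF \<O>[of 0]]]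
    by blast
  \<comment> \<open>A member of \<open>W\<close> taken from \<open>\<O> n\<close> misses \<open>y n\<close>, so an \<open>\<omega>\<close>-cover inside \<open>W\<close> draws on several \<open>\<O> n\<close>.\<close>
  define S where "S = (SIGMA n:UNIV. \<O> n)"
  define g where "g = (\<lambda>(n, V). V - {y n})"
  define W where "W = g ` S"
  have "W \<in> omega_covers"
    unfolding W_def S_def g_def using omega_cover_punctured[OF T1 \<O> \<open>inj y\<close>] .
  define tag where "tag w = fst (inv_into S g w)" for w
  have tag: "\<exists>V\<in>\<O> (tag w). w = V - {y (tag w)}" if "w \<in> W" for w
  proof -
    have "inv_into S g w \<in> S"
      using that unfolding W_def by (rule inv_into_into)
    moreover have "g (inv_into S g w) = w"
      using that unfolding W_def by (rule f_inv_into_f)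
    ultimately show ?thesis unfolding S_def g_def tag_def by (auto split: prod.splits)
  qed
  define colour where "colour P = (if inj_on tag P then 2 else 1 :: nat)" for P
  have "colour ` [W]\<^bsup>2\<^esup> \<subseteq> {1..2}" unfolding colour_def by auto
  then obtain i B where B: "B \<subseteq> W" "B \<in> omega_covers"
    and homogeneous: "\<And>P. P \<in> [B]\<^bsup>2\<^esup> \<Longrightarrow> colour P = i"
    by (rule partition_rel2D[OF partition \<open>W \<in> omega_covers\<close>]) auto
  have colour_pair: "colour {v, w} = (if tag v = tag w then 1 else 2)" if "v \<noteq> w" for v w
    using that unfolding colour_def by auto
  have misses: "y (tag w) \<notin> w" if "w \<in> B" for w
    using tag[of w] that B(1) by auto
  obtain v v' where "v \<in> B" "v' \<in> B" "tag v \<noteq> tag v'"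
    using omega_cover_tags_differ[where y = y and tag = tag, OF B(2) misses] by blast
  then have "i = 2" using homogeneous[of "{v, v'}"] colour_pair[of v v'] by auto
  have "inj_on tag B"
  proof (rule inj_onI, rule ccontr)
    fix w w'
    assume "w \<in> B" "w' \<in> B" "tag w = tag w'" "w \<noteq> w'"
    then show False using homogeneous[of "{w, w'}"] colour_pair[of w w'] \<open>i = 2\<close> by simp
  qed
  moreover have "\<exists>V\<in>\<O> (tag w). w \<subseteq> V" if "w \<in> B" for w
    using tag[of w] that B(1) by blast
  ultimately show "\<exists>T. (\<forall>n. T n \<in> \<O> n) \<and> range T \<in> omega_covers"
    by (rule S1_of_injectively_tagged_refinement[OF \<O> B(2)])
qed

lemma S1_iff_partition_rel2:
  assumes "\<And>p :: 'a::topological_space. open (- {p})"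
    and "\<And>\<U>. (\<U> :: 'a set set) \<in> omega_covers \<Longrightarrow> \<exists>\<V>\<subseteq>\<U>. countable \<V> \<and> \<V> \<in> omega_covers"
  shows "S1 (omega_covers :: 'a set set set) omega_covers \<longleftrightarrow>
    (\<forall>k\<ge>1. partition_rel2 (omega_covers :: 'a set set set) omega_covers k)"
  using S1_imp_partition_rel2[OF assms(2)] partition_rel2_imp_S1[OF assms(1)]
  by (metis one_le_numeral)

theorem theorem4p7:
  fixes Y :: "'a::uniform_space set"
  assumes "uniformity_separated TYPE('a)"
    and "sigma_compact_space TYPE('a)"
  shows "S1 (omega_covers :: 'a set set set) (omega_covers_of Y) \<longleftrightarrow>
         (\<forall>k::nat. k \<ge> 1 \<longrightarrow> partition_rel2 (omega_covers :: 'a set set set) (omega_covers_of Y) k)"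
proof -
  have T1: "\<And>p :: 'a. open (- {p})"
    using uniformity_separated_open_Compl_singleton[OF assms(1)] .
  show ?thesis
  proof (cases "finite (- Y)")
    case True
    have "S1 omega_covers (omega_covers_of Y) \<longleftrightarrow> S1 (omega_covers :: 'a set set set) omega_covers"
      by (rule S1_omega_covers_of_cofinite[OF True])
    moreover have "partition_rel2 omega_covers (omega_covers_of Y) k \<longleftrightarrow>
        partition_rel2 (omega_covers :: 'a set set set) omega_covers k" for k
      by (rule partition_rel2_omega_covers_of_cofinite[OF True])
    ultimately show ?thesis
      using S1_iff_partition_rel2[OF T1 sigma_compact_countable_omega_subcover[OF assms(2)]] by simp
  next
    case False
    then show ?thesis using S1_partition_rel2_fail_coinfinite[OF T1 False] by auto
  qed
qed

end
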